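(* Let $n$, $k$, $t$ be positive integers with $k\geq t+1$ and $n\geq 2k$, and let $V$ be an $n$-dimensional vector space over $\mathbb{F}_q$. Suppose $\mathcal{F}\subseteq{V\brack k}$ is an almost $t$-intersecting family with $\tau_t(\mathcal{F})<k$ which has a unique $t$-cover $T$ of dimension $\tau_t(\mathcal{F})$. If $A$ is a subspace of $V$ with $\dim(A)<\tau_t(\mathcal{F})$ and $\dim(A\cap T)\geq t$, then $$|(\mathcal{F}\setminus\mathcal{F}_T)_A|\leq{k-t+1\brack 1}^{\tau_t(\mathcal{F})-\dim(A)+1}{n-\tau_t(\mathcal{F})-1\brack k-\tau_t(\mathcal{F})-1}+\sum_{i=0}^{\tau_t(\mathcal{F})-\dim(A)}{k-t+1\brack 1}^{i}.$$
   Context: $q$ is a prime power; ${W\brack k}$ is the set of $k$-dimensional subspaces of $W$ and ${m\brack r}$ the Gaussian binomial coefficient $\prod_{i=0}^{r-1}\frac{q^{m-i}-1}{q^{r-i}-1}$ (equal to $1$ for $r=0$). A family $\mathcal{F}\subseteq{V\brack k}$ is almost $t$-intersecting if for each $F\in\mathcal{F}$ there is at most one $F'\in\mathcal{F}$ with $\dim(F\cap F')<t$. A subspace $W$ is a $t$-cover of $\mathcal{F}$ if $\dim(W\cap F)\geq t$ for all $F\in\mathcal{F}$; $\tau_t(\mathcal{F})$ is the minimum dimension of a $t$-cover of $\mathcal{F}$. For a family $\mathcal{B}$ and subspace $A$, $\mathcal{B}_A=\{F\in\mathcal{B}: A\subseteq F\}$. *)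

theory Defs
  imports "HOL-Analysis.Analysis"
begin

text \<open>The ambient space V is the coordinate space ('a ^ 'n) over a finite field 'a,
  so q = CARD('a) and n = CARD('n).\<close>

definition gauss_binom :: "nat \<Rightarrow> nat \<Rightarrow> nat \<Rightarrow> real" where
  "gauss_binom q m r = (\<Prod>i<r. (real q ^ (m - i) - 1) / (real q ^ (r - i) - 1))"

definition subspaces_of_dim :: "nat \<Rightarrow> ('a::field ^ 'n) set set" where
  "subspaces_of_dim k = {W. vec.subspace W \<and> vec.dim W = k}"

definition almost_t_intersecting :: "nat \<Rightarrow> ('a::field ^ 'n) set set \<Rightarrow> bool" where
  "almost_t_intersecting t \<F> \<longleftrightarrow>
     (\<forall>F\<in>\<F>. card {F'\<in>\<F>. vec.dim (F \<inter> F') < t} \<le> 1)"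

definition t_cover :: "nat \<Rightarrow> ('a::field ^ 'n) set set \<Rightarrow> ('a ^ 'n) set \<Rightarrow> bool" where
  "t_cover t \<F> W \<longleftrightarrow> vec.subspace W \<and> (\<forall>F\<in>\<F>. vec.dim (W \<inter> F) \<ge> t)"

definition tau :: "nat \<Rightarrow> ('a::field ^ 'n) set set \<Rightarrow> nat" where
  "tau t \<F> = (LEAST d. \<exists>W. t_cover t \<F> W \<and> vec.dim W = d)"

definition containing :: "('a ^ 'n) set set \<Rightarrow> ('a ^ 'n) set \<Rightarrow> ('a ^ 'n) set set" where
  "containing \<B> A = {F\<in>\<B>. A \<subseteq> F}"

end

theory Submission
  imports Defs
begin

text \<open>Write \<open>c\<close> for the Gaussian coefficient \<open>[k-t+1, 1]\<close> and induct on \<open>\<tau> + 1 - dim A\<close>.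
  When \<open>dim A = \<tau> + 1\<close>, count all \<open>k\<close>-spaces through \<open>A\<close>. Otherwise \<open>A \<noteq> T\<close>, so by
  uniqueness of the minimum \<open>t\<close>-cover \<open>A\<close> is not a \<open>t\<close>-cover: some \<open>F\<^sub>0\<close> in the family
  meets \<open>A\<close> in dimension \<open>d < t\<close>. Every member through \<open>A\<close>, except the at most one member
  meeting \<open>F\<^sub>0\<close> in dimension \<open>< t\<close>, contains at least \<open>q\<^sup>t - q\<^sup>d\<close> vectors of \<open>F\<^sub>0 - A\<close>,
  and the members through \<open>A\<close> containing a given \<open>x \<in> F\<^sub>0 - A\<close> all contain the space
  \<open>span (A \<union> {x})\<close>, of dimension \<open>dim A + 1\<close>. Double counting the pairs \<open>(x, F)\<close>, together with
  \<open>q\<^sup>k - q\<^sup>d \<le> c (q\<^sup>t - q\<^sup>d)\<close>, gives \<open>|\<F>\<^sub>A| \<le> c b + 1\<close> whenever \<open>b\<close> bounds the counts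
  for these larger spaces, and this recursion unrolls into the stated geometric sum.\<close>

lemma card_span_insert:
  fixes B :: "('a::{field,finite}^'n) set"
  assumes "x \<notin> vec.span B"
  shows "card (vec.span (insert x B)) = CARD('a) * card (vec.span B)"
proof -
  let ?f = "\<lambda>(c, v). c *s x + v"
  have "inj_on ?f (UNIV \<times> vec.span B)"
  proof (rule inj_onI, clarsimp)
    fix c v c' v'
    assume v: "v \<in> vec.span B" "v' \<in> vec.span B" and eq: "c *s x + v = c' *s x + v'"
    have "(c - c') *s x = v' - v"
      using eq by (simp add: vec.scale_left_diff_distrib algebra_simps)
    then have "(c - c') *s x \<in> vec.span B"
      using vec.span_diff[OF v(2) v(1)] by simp
    have "c = c'"
    proof (rule ccontr)
      assume "c \<noteq> c'"
      then have "x = inverse (c - c') *s ((c - c') *s x)" by (simp only: vec.scale_scale, simp)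
      also have "\<dots> \<in> vec.span B"
        using \<open>(c - c') *s x \<in> vec.span B\<close> by (rule vec.span_scale)
      finally show False using assms by simp
    qed
    then show "c = c' \<and> v = v'" using eq by simp
  qed
  moreover have "?f ` (UNIV \<times> vec.span B) = vec.span (insert x B)"
  proof
    show "?f ` (UNIV \<times> vec.span B) \<subseteq> vec.span (insert x B)"
    proof (clarsimp simp: vec.span_insert)
      fix a b assume "b \<in> vec.span B"
      then show "\<exists>k. a *s x + b - k *s x \<in> vec.span B" by (intro exI[of _ a]) simp
    qed
    show "vec.span (insert x B) \<subseteq> ?f ` (UNIV \<times> vec.span B)"
    proof
      fix y assume "y \<in> vec.span (insert x B)"
      then obtain c where "y - c *s x \<in> vec.span B" by (auto simp: vec.span_insert)
      then show "y \<in> ?f ` (UNIV \<times> vec.span B)" by (intro image_eqI[of _ _ "(c, y - c *s x)"]) auto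
    qed
  qed
  ultimately have "card (vec.span (insert x B)) = card ((UNIV :: 'a set) \<times> vec.span B)"
    by (metis card_image)
  then show ?thesis by (simp add: card_cartesian_product)
qed

lemma card_span_independent:
  fixes B :: "('a::{field,finite}^'n) set"
  assumes "vec.independent B"
  shows "card (vec.span B) = CARD('a) ^ card B"
proof -
  have "finite B" by simp
  then show ?thesis using assms
  proof (induction B rule: finite_induct)
    case empty
    then show ?case by simp
  next
    case (insert x B)
    then have "vec.independent B" "x \<notin> vec.span B"
      by (auto simp: vec.independent_insert)
    with insert show ?case by (simp add: card_span_insert)
  qed
qed

lemma card_subspace:
  fixes S :: "('a::{field,finite}^'n) set"
  assumes "vec.subspace S"
  shows "card S = CARD('a) ^ vec.dim S"
proof -
  obtain B where "B \<subseteq> S" "vec.independent B" "S \<subseteq> vec.span B" "card B = vec.dim S"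
    using vec.basis_exists by blast
  with assms show ?thesis
    using card_span_independent vec.span_subspace by metis
qed

lemma card_subspace_diff:
  fixes S U :: "('a::{field,finite}^'n) set"
  assumes "vec.subspace S" "vec.subspace U" "S \<subseteq> U"
  shows "real (card (U - S)) = real CARD('a) ^ vec.dim U - real CARD('a) ^ vec.dim S"
proof -
  have "card S \<le> card U" by (rule card_mono) (use assms in auto)
  then show ?thesis
    using assms by (simp add: card_Diff_subset card_subspace of_nat_diff flip: of_nat_power)
qed

lemma two_le_card_field: "2 \<le> CARD('a::{field,finite})"
  using card_mono[of UNIV "{0::'a, 1}"] by simp

lemma dim_span_insert:
  fixes B :: "('a::field^'n) set"
  assumes "vec.subspace B" "x \<notin> B"
  shows "vec.dim (vec.span (insert x B)) = vec.dim B + 1"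
  using assms by (simp add: vec.dim_insert vec.span_eq_iff[THEN iffD2])

lemma double_counting_le:
  fixes \<S> :: "'b set set" and X :: "'b set"
  assumes "finite \<S>" "finite X"
    and "\<And>G. G \<in> \<S> \<Longrightarrow> a \<le> real (card (X \<inter> G))"
    and "\<And>x. x \<in> X \<Longrightarrow> real (card {G\<in>\<S>. x \<in> G}) \<le> b"
  shows "real (card \<S>) * a \<le> real (card X) * b"
proof -
  have "real (card \<S>) * a \<le> (\<Sum>G\<in>\<S>. real (card (X \<inter> G)))"
    using sum_mono[of \<S> "\<lambda>_. a"] assms(3) by simp
  also have "\<dots> = (\<Sum>G\<in>\<S>. \<Sum>x\<in>X. if x \<in> G then 1 else 0)"
    using assms(2) by (simp add: sum.If_cases Int_def conj_commute)
  also have "\<dots> = (\<Sum>x\<in>X. \<Sum>G\<in>\<S>. if x \<in> G then 1 else 0)"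
    by (rule sum.swap)
  also have "\<dots> = (\<Sum>x\<in>X. real (card {G\<in>\<S>. x \<in> G}))"
    using assms(1) by (simp add: sum.If_cases Collect_conj_eq Int_commute)
  also have "\<dots> \<le> real (card X) * b"
    using sum_mono[of X _ "\<lambda>_. b"] assms(4) by simp
  finally show ?thesis .
qed

lemma gauss_binom_nonneg: "1 \<le> q \<Longrightarrow> 0 \<le> gauss_binom q m r"
  unfolding gauss_binom_def by (intro prod_nonneg divide_nonneg_nonneg) (auto simp: one_le_power)

lemma gauss_binom_Suc:
  "gauss_binom q m (Suc r) = (real q ^ m - 1) / (real q ^ Suc r - 1) * gauss_binom q (m - 1) r"
  unfolding gauss_binom_def by (subst prod.lessThan_Suc_shift) (simp add: diff_diff_add)

lemma gauss_binom_one: "gauss_binom q m 1 = (real q ^ m - 1) / (real q - 1)"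
  by (simp add: gauss_binom_def)

lemma card_subspaces_containing_double_count:
  fixes B :: "('a::{field,finite}^'n) set"
  assumes "vec.subspace B"
    and "\<And>x. x \<notin> B \<Longrightarrow> real (card (containing (subspaces_of_dim m) (vec.span (insert x B)))) \<le> g"
  shows "real (card (containing (subspaces_of_dim m) B)) * (real CARD('a) ^ m - real CARD('a) ^ vec.dim B)
           \<le> (real CARD('a) ^ CARD('n) - real CARD('a) ^ vec.dim B) * g"
proof -
  have "real (card (UNIV - B)) = real CARD('a) ^ CARD('n) - real CARD('a) ^ vec.dim B"
    using card_subspace_diff[OF assms(1) vec.subspace_UNIV] by (simp add: vec_dim_card del: vec.dim_UNIV)
  moreover have "real (card (containing (subspaces_of_dim m) B)) * (real CARD('a) ^ m - real CARD('a) ^ vec.dim B)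
      \<le> real (card (UNIV - B)) * g"
  proof (rule double_counting_le)
    fix G assume "G \<in> containing (subspaces_of_dim m) B"
    then have "vec.subspace G" "vec.dim G = m" "B \<subseteq> G"
      by (auto simp: containing_def subspaces_of_dim_def)
    moreover have "(UNIV - B) \<inter> G = G - B" by auto
    ultimately show "real CARD('a) ^ m - real CARD('a) ^ vec.dim B \<le> real (card ((UNIV - B) \<inter> G))"
      using card_subspace_diff[OF assms(1)] by simp
  next
    fix x assume "x \<in> UNIV - B"
    moreover have "{G \<in> containing (subspaces_of_dim m) B. x \<in> G}
        = containing (subspaces_of_dim m) (vec.span (insert x B))"
      using vec.span_minimal[of "insert x B"] vec.span_superset[of "insert x B"]
      by (auto simp: containing_def subspaces_of_dim_def)
    ultimately show "real (card {G \<in> containing (subspaces_of_dim m) B. x \<in> G}) \<le> g"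
      using assms(2) by simp
  qed auto
  ultimately show ?thesis by simp
qed

lemma card_subspaces_containing_le:
  fixes B :: "('a::{field,finite}^'n) set"
  assumes "vec.subspace B"
  shows "real (card (containing (subspaces_of_dim (vec.dim B + r)) B))
           \<le> gauss_binom CARD('a) (CARD('n) - vec.dim B) r"
  using assms
proof (induction r arbitrary: B)
  case 0
  then have "containing (subspaces_of_dim (vec.dim B)) B \<subseteq> {B}"
    by (auto simp: containing_def subspaces_of_dim_def dest: vec.subspace_dim_equal)
  then have "card (containing (subspaces_of_dim (vec.dim B)) B) \<le> 1"
    using card_mono[of "{B}"] by fastforce
  then show ?case by (simp add: gauss_binom_def)
next
  case (Suc r)
  define \<S> where "\<S> = containing (subspaces_of_dim (vec.dim B + Suc r)) B"
  define Q where "Q = real CARD('a)"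
  define b where "b = vec.dim B"
  define n where "n = CARD('n)"
  define g where "g = gauss_binom CARD('a) (n - (b + 1)) r"
  have "real (card \<S>) * (Q ^ (b + Suc r) - Q ^ b) \<le> (Q ^ n - Q ^ b) * g"
    unfolding \<S>_def Q_def b_def n_def
  proof (rule card_subspaces_containing_double_count[OF Suc.prems])
    fix x assume "x \<notin> B"
    with Suc.IH[of "vec.span (insert x B)"] dim_span_insert[OF Suc.prems]
    show "real (card (containing (subspaces_of_dim (vec.dim B + Suc r)) (vec.span (insert x B)))) \<le> g"
      by (simp add: g_def n_def b_def)
  qed
  moreover have "Q ^ n = Q ^ b * Q ^ (n - b)"
    using dim_subset_UNIV_cart_gen[of B] by (simp add: b_def n_def flip: power_add)
  moreover have "Q > 1"
    using two_le_card_field[where 'a='a] by (simp add: Q_def)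
  then have "Q ^ b > 0" "Q ^ Suc r > 1"
    using one_less_power[of Q "Suc r"] by simp_all
  ultimately have "Q ^ b * (real (card \<S>) * (Q ^ Suc r - 1)) \<le> Q ^ b * ((Q ^ (n - b) - 1) * g)"
    by (simp add: power_add algebra_simps)
  then have "real (card \<S>) \<le> (Q ^ (n - b) - 1) / (Q ^ Suc r - 1) * g"
    using \<open>Q ^ b > 0\<close> \<open>Q ^ Suc r > 1\<close> by (simp add: pos_le_divide_eq)
  also have "\<dots> = gauss_binom CARD('a) (n - b) (Suc r)"
    by (simp add: gauss_binom_Suc g_def Q_def diff_diff_add)
  finally show ?case by (simp add: \<S>_def n_def b_def)
qed

lemma power_diff_le_gauss_binom_mult:
  assumes "2 \<le> q" "d < t" "t \<le> k"
  shows "real q ^ k - real q ^ d \<le> gauss_binom q (k - t + 1) 1 * (real q ^ t - real q ^ d)"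
proof -
  define Q where "Q = real q"
  define u where "u = Q ^ (k - t)"
  define v where "v = Q ^ (t - d - 1)"
  define w where "w = Q ^ d"
  have "u \<ge> 1" "v \<ge> 1" "w \<ge> 0" "Q > 1"
    using assms by (auto simp: u_def v_def w_def Q_def one_le_power)
  have qk: "Q ^ k = w * v * u * Q" and qt: "Q ^ t = w * v * Q"
    using assms by (simp_all add: u_def v_def w_def flip: power_add power_Suc2)
  have "(Q ^ (k - t + 1) - 1) * (Q ^ t - Q ^ d) - (Q ^ k - Q ^ d) * (Q - 1)
          = w * Q * ((u - 1) * (v - 1))"
    unfolding qk qt by (simp add: u_def w_def algebra_simps)
  also have "\<dots> \<ge> 0"
    using \<open>u \<ge> 1\<close> \<open>v \<ge> 1\<close> \<open>w \<ge> 0\<close> \<open>Q > 1\<close> by simp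
  finally have "Q ^ k - Q ^ d \<le> (Q ^ (k - t + 1) - 1) * (Q ^ t - Q ^ d) / (Q - 1)"
    using \<open>Q > 1\<close> by (simp add: pos_le_divide_eq mult.commute)
  then show ?thesis
    unfolding gauss_binom_one Q_def by simp
qed

lemma card_containing_meeting_double_count:
  fixes \<G> :: "('a::{field,finite}^'n) set set"
  assumes "\<forall>G\<in>\<G>. vec.subspace G" "vec.subspace F\<^sub>0" "vec.subspace A"
    and "\<forall>x\<in>F\<^sub>0 - A. real (card (containing \<G> (vec.span (insert x A)))) \<le> b"
  shows "real (card {G \<in> containing \<G> A. t \<le> vec.dim (F\<^sub>0 \<inter> G)})
           * (real CARD('a) ^ t - real CARD('a) ^ vec.dim (A \<inter> F\<^sub>0))
         \<le> real (card (F\<^sub>0 - A)) * b" (is "real (card ?\<H>) * _ \<le> _")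
proof (rule double_counting_le)
  fix G assume "G \<in> ?\<H>"
  then have G: "vec.subspace G" "A \<subseteq> G" "t \<le> vec.dim (G \<inter> F\<^sub>0)"
    using assms(1) by (auto simp: containing_def Int_commute)
  have "(F\<^sub>0 - A) \<inter> G = (G \<inter> F\<^sub>0) - (A \<inter> F\<^sub>0)" using G(2) by auto
  then have "real (card ((F\<^sub>0 - A) \<inter> G)) = real CARD('a) ^ vec.dim (G \<inter> F\<^sub>0) - real CARD('a) ^ vec.dim (A \<inter> F\<^sub>0)"
    using G(2) card_subspace_diff[OF vec.subspace_inter[OF assms(3,2)] vec.subspace_inter[OF G(1) assms(2)]]
    by auto
  moreover have "real CARD('a) ^ t \<le> real CARD('a) ^ vec.dim (G \<inter> F\<^sub>0)"
    using two_le_card_field[where 'a='a] G(3) by (simp add: power_increasing)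
  ultimately show "real CARD('a) ^ t - real CARD('a) ^ vec.dim (A \<inter> F\<^sub>0) \<le> real (card ((F\<^sub>0 - A) \<inter> G))"
    by simp
next
  fix x assume x: "x \<in> F\<^sub>0 - A"
  have "{G \<in> ?\<H>. x \<in> G} \<subseteq> containing \<G> (vec.span (insert x A))"
  proof
    fix G assume "G \<in> {G \<in> ?\<H>. x \<in> G}"
    then have "G \<in> \<G>" "insert x A \<subseteq> G" by (auto simp: containing_def)
    with assms(1) show "G \<in> containing \<G> (vec.span (insert x A))"
      by (simp add: containing_def vec.span_minimal)
  qed
  then have "real (card {G \<in> ?\<H>. x \<in> G})
      \<le> real (card (containing \<G> (vec.span (insert x A))))"
    by (intro of_nat_mono card_mono) auto
  also have "\<dots> \<le> b" using x assms(4) by blast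
  finally show "real (card {G \<in> ?\<H>. x \<in> G}) \<le> b" .
qed auto

lemma card_containing_le_extensions:
  fixes \<F> :: "('a::{field,finite}^'n) set set"
  assumes "\<F> \<subseteq> subspaces_of_dim k" "almost_t_intersecting t \<F>" "t \<le> k" "\<G> \<subseteq> \<F>"
    and "F\<^sub>0 \<in> \<F>" "vec.subspace A" "vec.dim (A \<inter> F\<^sub>0) < t"
    and "\<forall>x\<in>F\<^sub>0 - A. real (card (containing \<G> (vec.span (insert x A)))) \<le> b"
  shows "real (card (containing \<G> A)) \<le> gauss_binom CARD('a) (k - t + 1) 1 * b + 1"
proof -
  define Q where "Q = real CARD('a)"
  define d where "d = vec.dim (A \<inter> F\<^sub>0)"
  define \<H> where "\<H> = {G \<in> containing \<G> A. t \<le> vec.dim (F\<^sub>0 \<inter> G)}"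
  define \<B> where "\<B> = {G \<in> \<F>. vec.dim (F\<^sub>0 \<inter> G) < t}"
  have sub: "\<forall>G\<in>\<G>. vec.subspace G" "vec.subspace F\<^sub>0" "vec.dim F\<^sub>0 = k"
    using assms(1,4,5) by (auto simp: subspaces_of_dim_def)
  have "card (containing \<G> A) \<le> card (\<H> \<union> \<B>)"
    using assms(4) by (intro card_mono) (auto simp: \<H>_def \<B>_def containing_def)
  also have "\<dots> \<le> card \<H> + card \<B>" by (rule card_Un_le)
  also have "card \<B> \<le> 1"
    using assms(2,5) unfolding almost_t_intersecting_def \<B>_def by blast
  finally have card_le: "real (card (containing \<G> A)) \<le> real (card \<H>) + 1" by simp
  have "Q > 1" "d < t" using two_le_card_field[where 'a='a] assms(7) by (simp_all add: Q_def d_def)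
  then have "Q ^ d < Q ^ t" "Q ^ d < Q ^ k"
    using assms(3) by (simp_all add: power_strict_increasing)
  have "F\<^sub>0 - A = F\<^sub>0 - (A \<inter> F\<^sub>0)" by auto
  then have card_F0: "real (card (F\<^sub>0 - A)) = Q ^ k - Q ^ d"
    using card_subspace_diff[OF vec.subspace_inter[OF assms(6) sub(2)] sub(2)] sub(3)
    by (simp add: Q_def d_def)
  with \<open>Q ^ d < Q ^ k\<close> have "real (card (F\<^sub>0 - A)) > 0" by linarith
  then have "F\<^sub>0 - A \<noteq> {}" by (metis card.empty of_nat_0 less_irrefl)
  then obtain x where "x \<in> F\<^sub>0 - A" by blast
  with assms(8) have "real (card (containing \<G> (vec.span (insert x A)))) \<le> b" by blast
  then have "0 \<le> b" by (meson of_nat_0_le_iff order_trans)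
  have "real (card \<H>) * (Q ^ t - Q ^ d) \<le> (Q ^ k - Q ^ d) * b"
    using card_containing_meeting_double_count[OF sub(1,2) assms(6,8)] card_F0
    by (simp add: \<H>_def Q_def d_def)
  also have "\<dots> \<le> gauss_binom CARD('a) (k - t + 1) 1 * (Q ^ t - Q ^ d) * b"
    using power_diff_le_gauss_binom_mult[OF two_le_card_field \<open>d < t\<close> assms(3)] \<open>0 \<le> b\<close>
    unfolding Q_def by (rule mult_right_mono)
  also have "\<dots> = gauss_binom CARD('a) (k - t + 1) 1 * b * (Q ^ t - Q ^ d)"
    by (simp add: ac_simps)
  finally have "real (card \<H>) \<le> gauss_binom CARD('a) (k - t + 1) 1 * b"
    using \<open>Q ^ d < Q ^ t\<close> by (simp add: mult_le_cancel_right)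
  with card_le show ?thesis by linarith
qed

lemma ex_member_meets_in_dim_less:
  fixes \<F> :: "('a::field ^ 'n) set set"
  assumes "\<forall>W. t_cover t \<F> W \<and> vec.dim W = tau t \<F> \<longrightarrow> W = T"
    and "vec.subspace A" "vec.dim A \<le> tau t \<F>" "A \<noteq> T"
  shows "\<exists>F\<^sub>0\<in>\<F>. vec.dim (A \<inter> F\<^sub>0) < t"
proof (rule ccontr)
  assume "\<not> ?thesis"
  then have "t_cover t \<F> A" using assms(2) by (auto simp: t_cover_def)
  then have "tau t \<F> \<le> vec.dim A" unfolding tau_def by (blast intro: Least_le)
  with assms(3) have "vec.dim A = tau t \<F>" by simp
  with assms(1) \<open>t_cover t \<F> A\<close> have "A = T" by blast
  with assms(4) show False by contradiction
qed

lemma card_containing_family_le: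
  fixes \<G> :: "('a::{field,finite} ^ 'n) set set"
  assumes "\<G> \<subseteq> subspaces_of_dim k" "vec.subspace A" "vec.dim A \<le> k"
  shows "real (card (containing \<G> A)) \<le> gauss_binom CARD('a) (CARD('n) - vec.dim A) (k - vec.dim A)"
proof -
  have "containing \<G> A \<subseteq> containing (subspaces_of_dim (vec.dim A + (k - vec.dim A))) A"
    using assms(1,3) by (auto simp: containing_def)
  then have "real (card (containing \<G> A))
      \<le> real (card (containing (subspaces_of_dim (vec.dim A + (k - vec.dim A))) A))"
    by (intro of_nat_mono card_mono) auto
  also have "\<dots> \<le> gauss_binom CARD('a) (CARD('n) - vec.dim A) (k - vec.dim A)"
    using assms(2) by (rule card_subspaces_containing_le)
  finally show ?thesis .
qed

lemma geometric_bound_Suc: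
  fixes c N :: "'a::comm_semiring_1"
  shows "c * (c ^ j * N + (\<Sum>i<j. c ^ i)) + 1 = c ^ Suc j * N + (\<Sum>i<Suc j. c ^ i)"
  using sum.lessThan_Suc_shift[of "\<lambda>i. c ^ i" j]
  by (simp add: sum_distrib_left algebra_simps)

lemma card_containing_outside_cover_le:
  fixes \<F> :: "('a::{field,finite} ^ 'n) set set"
  assumes "\<F> \<subseteq> subspaces_of_dim k" "almost_t_intersecting t \<F>" "t \<le> k" "tau t \<F> < k"
    and "\<forall>W. t_cover t \<F> W \<and> vec.dim W = tau t \<F> \<longrightarrow> W = T"
    and "vec.subspace A" "vec.dim A + j = tau t \<F> + 1" "0 < j \<Longrightarrow> t \<le> vec.dim (A \<inter> T)"
  shows "real (card (containing (\<F> - containing \<F> T) A))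
    \<le> gauss_binom CARD('a) (k - t + 1) 1 ^ j
        * gauss_binom CARD('a) (CARD('n) - tau t \<F> - 1) (k - tau t \<F> - 1)
      + (\<Sum>i<j. gauss_binom CARD('a) (k - t + 1) 1 ^ i)"
  using assms(6-8)
proof (induction j arbitrary: A)
  case 0
  have "\<F> - containing \<F> T \<subseteq> subspaces_of_dim k" using assms(1) by blast
  moreover have "vec.dim A \<le> k" using "0.prems"(2) assms(4) by simp
  ultimately show ?case
    using card_containing_family_le[OF _ "0.prems"(1)] "0.prems"(2) by simp
next
  case (Suc j)
  define c where "c = gauss_binom CARD('a) (k - t + 1) 1"
  define N where "N = gauss_binom CARD('a) (CARD('n) - tau t \<F> - 1) (k - tau t \<F> - 1)"
  have "real (card (containing (\<F> - containing \<F> T) A)) \<le> c * (c ^ j * N + (\<Sum>i<j. c ^ i)) + 1"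
  proof (cases "A = T")
    case True
    have "1 \<le> CARD('a)" using two_le_card_field[where 'a='a] by simp
    then have "0 \<le> c * (c ^ j * N + (\<Sum>i<j. c ^ i))"
      by (simp add: c_def N_def gauss_binom_nonneg sum_nonneg)
    moreover have "containing (\<F> - containing \<F> T) T = {}" by (auto simp: containing_def)
    ultimately show ?thesis using True by simp
  next
    case False
    then obtain F\<^sub>0 where F\<^sub>0: "F\<^sub>0 \<in> \<F>" "vec.dim (A \<inter> F\<^sub>0) < t"
      using ex_member_meets_in_dim_less[OF assms(5)] Suc.prems(1,2) by fastforce
    have "\<forall>x\<in>F\<^sub>0 - A. real (card (containing (\<F> - containing \<F> T) (vec.span (insert x A))))
        \<le> c ^ j * N + (\<Sum>i<j. c ^ i)"
    proof
      fix x assume "x \<in> F\<^sub>0 - A"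
      have "A \<subseteq> vec.span (insert x A)" using vec.span_superset by blast
      then have "vec.dim (A \<inter> T) \<le> vec.dim (vec.span (insert x A) \<inter> T)"
        by (intro vec.dim_subset) auto
      with Suc.prems(3) have "t \<le> vec.dim (vec.span (insert x A) \<inter> T)" by simp
      moreover have "vec.dim (vec.span (insert x A)) + j = tau t \<F> + 1"
        using dim_span_insert[OF Suc.prems(1)] \<open>x \<in> F\<^sub>0 - A\<close> Suc.prems(2) by simp
      ultimately show "real (card (containing (\<F> - containing \<F> T) (vec.span (insert x A))))
          \<le> c ^ j * N + (\<Sum>i<j. c ^ i)"
        unfolding c_def N_def by (intro Suc.IH) auto
    qed
    with F\<^sub>0 Suc.prems(1) show ?thesis
      unfolding c_def by (intro card_containing_le_extensions[OF assms(1-3)]) auto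
  qed
  then show ?case by (simp only: geometric_bound_Suc c_def N_def)
qed

theorem lemma5p1:
  fixes \<F> :: "('a::{field,finite} ^ 'n) set set"
    and T A :: "('a ^ 'n) set"
    and k t :: nat
  assumes "t \<ge> 1" and "k \<ge> t + 1" and "CARD('n) \<ge> 2 * k"
    and "\<F> \<subseteq> subspaces_of_dim k"
    and "almost_t_intersecting t \<F>"
    and "tau t \<F> < k"
    and "t_cover t \<F> T" and "vec.dim T = tau t \<F>"
    and "\<forall>W. t_cover t \<F> W \<and> vec.dim W = tau t \<F> \<longrightarrow> W = T"
    and "vec.subspace A" and "vec.dim A < tau t \<F>" and "vec.dim (A \<inter> T) \<ge> t"
  shows "real (card (containing (\<F> - containing \<F> T) A))
    \<le> gauss_binom CARD('a) (k - t + 1) 1 ^ (tau t \<F> - vec.dim A + 1)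
        * gauss_binom CARD('a) (CARD('n) - tau t \<F> - 1) (k - tau t \<F> - 1)
      + (\<Sum>i=0..tau t \<F> - vec.dim A. gauss_binom CARD('a) (k - t + 1) 1 ^ i)"
proof -
  have "vec.dim A + (tau t \<F> - vec.dim A + 1) = tau t \<F> + 1" using assms(11) by simp
  then have "real (card (containing (\<F> - containing \<F> T) A))
    \<le> gauss_binom CARD('a) (k - t + 1) 1 ^ (tau t \<F> - vec.dim A + 1)
        * gauss_binom CARD('a) (CARD('n) - tau t \<F> - 1) (k - tau t \<F> - 1)
      + (\<Sum>i<tau t \<F> - vec.dim A + 1. gauss_binom CARD('a) (k - t + 1) 1 ^ i)"
    using assms(2,12) by (intro card_containing_outside_cover_le[OF assms(4,5) _ assms(6,9,10)]) auto
  then show ?thesis by (simp add: lessThan_Suc_atMost atLeast0AtMost)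
qed

end
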